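(* Let $r,q,a\in\mathbb{R}$, $\sigma>0$, $b>0$, $0\le R<1$, $T>0$, and set $V_b(t)=be^{-a(T-t)}$. The solution $B(V,t)$ of the problem \[ \frac{\partial B}{\partial t}+\frac12\sigma^2V^2\frac{\partial^2B}{\partial V^2}+(r-q)V\frac{\partial B}{\partial V}-rB=0,\quad V_b(t)<V<+\infty,\ 0<t<T, \] \[ B(V_b(t),t)=e^{-r(T-t)}R,\ 0<t<T,\qquad B(V,T)=1,\ V>b, \] is given by \[ B(V,t)=R\,e^{-r(T-t)}+W(V,t)(1-R)e^{-r(T-t)}, \] where \[ W(V,t)=N(d_1)-\left(\frac{V}{be^{-a(T-t)}}\right)^{1-\frac{2(r-q-a)}{\sigma^2}}N(d_2), \] \[ d_1=\frac{\ln\frac{V}{b}+(r-q-\frac{\sigma^2}{2})(T-t)}{\sigma\sqrt{T-t}},\qquad d_2=\frac{\ln\frac{b}{V}+(r-q-2a-\frac{\sigma^2}{2})(T-t)}{\sigma\sqrt{T-t}}. \] Furthermore, for $V>V_b(t)$ (and $0\le t<T$), \[ B_V(V,t)>0,\qquad R\,e^{-r(T-t)}<B(V,t)<e^{-r(T-t)}. \]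
   Context: $N(x)=\frac{1}{\sqrt{2\pi}}\int_{-\infty}^{x}e^{-s^2/2}\,ds$ is the standard normal distribution function. (Financial interpretation: $V$ is the firm value, $B$ the price of a zero-coupon corporate bond with face value $1$ and maturity $T$, default occurs when $V\le V_b(t)$, and $Re^{-r(T-t)}$ is the default recovery; $W$ is the survival probability.) *)

theory Defs
  imports "HOL-Analysis.Analysis"
begin

definition Ncdf :: "real \<Rightarrow> real" where
  "Ncdf x = integral {..x} (\<lambda>s. exp (-(s^2) / 2)) / sqrt (2 * pi)"

definition Vb :: "real \<Rightarrow> real \<Rightarrow> real \<Rightarrow> real \<Rightarrow> real" where
  "Vb a b T t = b * exp (-a * (T - t))"

definition d1 :: "real \<Rightarrow> real \<Rightarrow> real \<Rightarrow> real \<Rightarrow> real \<Rightarrow> real \<Rightarrow> real \<Rightarrow> real" where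
  "d1 r q \<sigma> b T V t =
     (ln (V / b) + (r - q - \<sigma>^2 / 2) * (T - t)) / (\<sigma> * sqrt (T - t))"

definition d2 :: "real \<Rightarrow> real \<Rightarrow> real \<Rightarrow> real \<Rightarrow> real \<Rightarrow> real \<Rightarrow> real \<Rightarrow> real \<Rightarrow> real" where
  "d2 r q a \<sigma> b T V t =
     (ln (b / V) + (r - q - 2 * a - \<sigma>^2 / 2) * (T - t)) / (\<sigma> * sqrt (T - t))"

definition Wsurv :: "real \<Rightarrow> real \<Rightarrow> real \<Rightarrow> real \<Rightarrow> real \<Rightarrow> real \<Rightarrow> real \<Rightarrow> real \<Rightarrow> real" where
  "Wsurv r q a \<sigma> b T V t =
     Ncdf (d1 r q \<sigma> b T V t)
     - (V / (b * exp (-a * (T - t)))) powr (1 - 2 * (r - q - a) / \<sigma>^2)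
       * Ncdf (d2 r q a \<sigma> b T V t)"

definition Bond :: "real \<Rightarrow> real \<Rightarrow> real \<Rightarrow> real \<Rightarrow> real \<Rightarrow> real \<Rightarrow> real \<Rightarrow> real \<Rightarrow> real \<Rightarrow> real" where
  "Bond r q a \<sigma> b R T V t =
     R * exp (-r * (T - t)) + Wsurv r q a \<sigma> b T V t * (1 - R) * exp (-r * (T - t))"

end

theory Submission
  imports Defs "HOL-Probability.Probability" "HOL-Real_Asymp.Real_Asymp"
begin

text \<open>Write \<open>k = 1 - 2 (r - q - a) / \<sigma>\<^sup>2\<close>, \<open>x = ln (V / V\<^sub>b(t)) / (\<sigma> \<surd>(T - t))\<close> and
  \<open>m = k \<sigma> \<surd>(T - t) / 2\<close>. Then \<open>d\<^sub>1 = x - m\<close> and \<open>d\<^sub>2 = - x - m\<close>, whence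
  \<open>(V / V\<^sub>b)\<^sup>k \<phi>(d\<^sub>2) = \<phi>(d\<^sub>1)\<close>. With this identity the partial derivatives of
  \<open>W = N(d\<^sub>1) - (V / V\<^sub>b)\<^sup>k N(d\<^sub>2)\<close> are explicit and \<open>W\<close> solves the pricing equation without
  the discount term; moreover \<open>W = 0\<close> on the barrier (\<open>x = 0\<close>) and \<open>W \<rightarrow> 1\<close> at maturity above \<open>b\<close>.
  Above the barrier \<open>W\<^sub>V > 0\<close>: for \<open>k > 0\<close> the negative term is controlled by Mills' bound
  \<open>- u N(u) < \<phi>(u)\<close> at \<open>u = d\<^sub>2 \<le> - m < 0\<close>. Hence \<open>0 < W < 1\<close> there, and everything transfers
  to \<open>B = exp (- r (T - t)) (R + (1 - R) W)\<close>.\<close>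

lemma Ncdf_eq_integral: "Ncdf x = integral {..x} std_normal_density"
proof -
  have "(\<lambda>s. exp (- (s^2) / 2)) = (\<lambda>s. sqrt (2 * pi) * std_normal_density s)"
    by (simp add: std_normal_density_def)
  then show ?thesis
    unfolding Ncdf_def by simp
qed

lemma set_integrable_std_normal_density: "S \<in> sets borel \<Longrightarrow> set_integrable lborel S std_normal_density"
  using integrable_real_mult_indicator[of S lborel std_normal_density]
  by (simp add: set_integrable_def mult.commute)

lemma std_normal_density_integrable_on_atMost: "std_normal_density integrable_on {..x}"
  by (rule set_borel_integral_eq_integral(1)[OF set_integrable_std_normal_density]) simp

lemma continuous_on_std_normal_density: "continuous_on S std_normal_density"
  unfolding normal_density_def by (intro continuous_intros) auto

lemma Ncdf_eq_cdf: "Ncdf x = cdf std_normal_distribution x"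
proof -
  have set_int: "set_integrable lborel {..x} std_normal_density"
    by (rule set_integrable_std_normal_density) simp
  then have int: "integrable lborel (\<lambda>s. indicator {..x} s * std_normal_density s)"
    by (simp add: set_integrable_def)
  have "emeasure std_normal_distribution {..x}
      = (\<integral>\<^sup>+ s. ennreal (indicator {..x} s * std_normal_density s) \<partial>lborel)"
    by (subst emeasure_density) (auto intro!: nn_integral_cong simp: indicator_def)
  also have "\<dots> = ennreal (LINT s:{..x}|lborel. std_normal_density s)"
    unfolding set_lebesgue_integral_def real_scaleR_def by (rule nn_integral_eq_integral[OF int]) auto
  also have "\<dots> = ennreal (integral {..x} std_normal_density)"
    by (simp add: set_borel_integral_eq_integral(2)[OF set_int])
  finally show ?thesis
    using integral_nonneg[OF std_normal_density_integrable_on_atMost]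
    by (simp add: cdf_def2 measure_def Ncdf_eq_integral)
qed

interpretation std_normal: real_distribution std_normal_distribution
  by (rule real_dist_normal_dist)

lemma Ncdf_at_bot: "(Ncdf \<longlongrightarrow> 0) at_bot"
  unfolding Ncdf_eq_cdf[abs_def] by (rule std_normal.cdf_lim_at_bot)

lemma Ncdf_at_top: "(Ncdf \<longlongrightarrow> 1) at_top"
  unfolding Ncdf_eq_cdf[abs_def] by (rule std_normal.cdf_lim_at_top_prob)

lemma Ncdf_nonneg: "Ncdf x \<ge> 0"
  unfolding Ncdf_eq_cdf by (rule std_normal.cdf_nonneg)

lemma Ncdf_le_1: "Ncdf x \<le> 1"
  unfolding Ncdf_eq_cdf by (rule std_normal.cdf_bounded_prob)

lemma Ncdf_diff_eq_integral:
  assumes "a \<le> y"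
  shows "Ncdf y - Ncdf a = integral {a..y} std_normal_density"
proof -
  have "{..y} = {..a} \<union> {a..y}" and "negligible ({..a} \<inter> {a..y})"
    using assms by auto
  moreover have "std_normal_density integrable_on {a..y}"
    by (intro integrable_continuous_interval continuous_on_std_normal_density)
  ultimately show ?thesis
    using integral_Un[OF std_normal_density_integrable_on_atMost] by (simp add: Ncdf_eq_integral)
qed

lemma DERIV_Ncdf: "(Ncdf has_real_derivative std_normal_density x) (at x)"
proof -
  let ?I = "{x - 1..x + 1}"
  have "((\<lambda>y. Ncdf (x - 1) + integral {x - 1..y} std_normal_density)
          has_real_derivative std_normal_density x) (at x within ?I)"
    by (intro DERIV_const[THEN DERIV_add, simplified] integral_has_real_derivative
        continuous_on_std_normal_density) auto
  then have "(Ncdf has_real_derivative std_normal_density x) (at x within ?I)"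
    by (rule has_field_derivative_transform_within[where d = 1]) (auto simp flip: Ncdf_diff_eq_integral)
  moreover have "at x within ?I = at x"
    by (rule at_within_interior) auto
  ultimately show ?thesis
    by simp
qed

lemma DERIV_Ncdf_chain [derivative_intros]:
  "(f has_real_derivative f') (at x) \<Longrightarrow>
    ((\<lambda>x. Ncdf (f x)) has_real_derivative std_normal_density (f x) * f') (at x)"
  by (rule DERIV_chain2[OF DERIV_Ncdf])

lemma DERIV_std_normal_density: "(std_normal_density has_real_derivative - x * std_normal_density x) (at x)"
  unfolding std_normal_density_def[abs_def] by (auto intro!: derivative_eq_intros simp: field_simps)

lemma DERIV_std_normal_density_chain [derivative_intros]:
  "(f has_real_derivative f') (at x) \<Longrightarrow>
    ((\<lambda>x. std_normal_density (f x)) has_real_derivative - f x * std_normal_density (f x) * f') (at x)"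
  by (rule DERIV_chain2[OF DERIV_std_normal_density])

lemma strict_mono_Ncdf: "strict_mono Ncdf"
proof (rule strict_monoI)
  fix x y :: real
  assume "x < y"
  then show "Ncdf x < Ncdf y"
    by (rule DERIV_pos_imp_increasing) (metis DERIV_Ncdf normal_density_pos zero_less_one)
qed

lemma Ncdf_pos: "Ncdf x > 0"
  using strict_mono_Ncdf[THEN strict_monoD, of "x - 1" x] Ncdf_nonneg[of "x - 1"] by simp

lemma Ncdf_less_1: "Ncdf x < 1"
  using strict_mono_Ncdf[THEN strict_monoD, of x "x + 1"] Ncdf_le_1[of "x + 1"] by simp

lemma Ncdf_Mills_ratio_bound:
  assumes "u < 0"
  shows "- u * Ncdf u < std_normal_density u"
proof -
  define g where "g = (\<lambda>u. std_normal_density u / (- u) - Ncdf u)"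
  have "((\<lambda>u. std_normal_density u / (- u)) \<longlongrightarrow> 0) at_bot"
    unfolding std_normal_density_def by real_asymp
  then have g_at_bot: "(g \<longlongrightarrow> 0) at_bot"
    using tendsto_diff[OF _ Ncdf_at_bot] unfolding g_def by fastforce
  have "0 < g u"
  proof (rule DERIV_pos_imp_increasing_at_bot[OF _ g_at_bot])
    fix x assume "x \<le> u"
    with assms have "x < 0" by simp
    then have "(g has_real_derivative std_normal_density x / x^2) (at x)"
      unfolding g_def
      by (auto intro!: derivative_eq_intros simp: field_simps power2_eq_square)
    then show "\<exists>y. (g has_real_derivative y) (at x) \<and> y > 0"
      using \<open>x < 0\<close> normal_density_pos[of 1 0 x] by auto
  qed
  then have "Ncdf u < std_normal_density u / (- u)"
    unfolding g_def by linarith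
  then show ?thesis
    using pos_less_divide_eq[of "- u" "Ncdf u" "std_normal_density u"] assms
    by (metis mult.commute neg_0_less_iff_less)
qed

lemma obtain_sqrt_time_to_maturity:
  fixes t T :: real
  assumes "t < T"
  obtains s where "s > 0" "T - t = s^2" "sqrt (T - t) = s"
  using assms by (intro that[of "sqrt (T - t)"]) auto

lemma Vb_pos: "b > 0 \<Longrightarrow> Vb a b T t > 0"
  by (simp add: Vb_def)

lemma ln_div_Vb: "V > 0 \<Longrightarrow> b > 0 \<Longrightarrow> ln (V / Vb a b T t) = ln (V / b) + a * (T - t)"
  by (simp add: Vb_def ln_div ln_mult)

context
  fixes r q a \<sigma> b T :: real
  assumes \<sigma>_pos: "\<sigma> > 0" and b_pos: "b > 0"
begin

abbreviation D1 :: "real \<Rightarrow> real \<Rightarrow> real" where "D1 \<equiv> d1 r q \<sigma> b T"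
abbreviation D2 :: "real \<Rightarrow> real \<Rightarrow> real" where "D2 \<equiv> d2 r q a \<sigma> b T"

definition barrier_exponent :: real where
  "barrier_exponent = 1 - 2 * (r - q - a) / \<sigma>^2"

definition barrier_power :: "real \<Rightarrow> real \<Rightarrow> real" where
  "barrier_power V t = (V / Vb a b T t) powr barrier_exponent"

definition barrier_distance :: "real \<Rightarrow> real \<Rightarrow> real" where
  "barrier_distance V t = ln (V / Vb a b T t) / (\<sigma> * sqrt (T - t))"

definition drift_shift :: "real \<Rightarrow> real" where
  "drift_shift t = barrier_exponent * \<sigma> * sqrt (T - t) / 2"

lemma barrier_exponent_drift: "\<sigma>^2 * (1 - barrier_exponent) / 2 = r - q - a"
  using \<sigma>_pos by (simp add: barrier_exponent_def)

lemma Wsurv_eq: "Wsurv r q a \<sigma> b T V t = Ncdf (D1 V t) - barrier_power V t * Ncdf (D2 V t)"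
  unfolding Wsurv_def barrier_power_def barrier_exponent_def Vb_def ..

lemma barrier_power_eq_exp:
  "V > 0 \<Longrightarrow> barrier_power V t = exp (barrier_exponent * ln (V / Vb a b T t))"
  unfolding barrier_power_def using Vb_pos[OF b_pos, of a T t] by (simp add: powr_def)

lemma barrier_power_pos: "V > 0 \<Longrightarrow> barrier_power V t > 0"
  by (simp add: barrier_power_eq_exp)

lemma d1_d2_eq:
  assumes "V > 0" "t < T"
  shows "D1 V t = barrier_distance V t - drift_shift t"
    and "D2 V t = - barrier_distance V t - drift_shift t"
proof -
  obtain s where s: "s > 0" "T - t = s^2" "sqrt (T - t) = s"
    using obtain_sqrt_time_to_maturity[OF assms(2)] .
  have "ln (b / V) = - ln (V / b)"
    using assms b_pos by (simp add: ln_div)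
  then show "D1 V t = barrier_distance V t - drift_shift t"
    and "D2 V t = - barrier_distance V t - drift_shift t"
    using s \<sigma>_pos unfolding d1_def d2_def barrier_distance_def drift_shift_def barrier_exponent_def
      ln_div_Vb[OF assms(1) b_pos]
    by (simp_all add: field_simps power2_eq_square)
qed

lemma std_normal_density_d2:
  assumes "V > 0" "t < T"
  shows "std_normal_density (D2 V t) = std_normal_density (D1 V t) / barrier_power V t"
proof -
  define x m where "x = barrier_distance V t" and "m = drift_shift t"
  have "barrier_exponent * ln (V / Vb a b T t) = 2 * x * m"
    using assms \<sigma>_pos unfolding x_def m_def barrier_distance_def drift_shift_def by simp
  then have "- ((- x - m)^2 / 2) = - ((x - m)^2 / 2) - barrier_exponent * ln (V / Vb a b T t)"
    by (simp add: power2_eq_square field_simps)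
  then show ?thesis
    unfolding d1_d2_eq[OF assms] std_normal_density_def barrier_power_eq_exp[OF assms(1)] x_def m_def
    by (simp add: exp_diff)
qed

lemma DERIV_d1_V:
  assumes "V > 0" "t < T"
  shows "((\<lambda>x. D1 x t) has_real_derivative 1 / (V * \<sigma> * sqrt (T - t))) (at V)"
proof -
  obtain s where s: "s > 0" "T - t = s^2" "sqrt (T - t) = s"
    using obtain_sqrt_time_to_maturity[OF assms(2)] .
  show ?thesis
    using s \<sigma>_pos b_pos assms unfolding d1_def s(3)
    by (auto intro!: derivative_eq_intros simp: field_simps)
qed

lemma DERIV_d2_V:
  assumes "V > 0" "t < T"
  shows "((\<lambda>x. D2 x t) has_real_derivative - 1 / (V * \<sigma> * sqrt (T - t))) (at V)"
proof -
  obtain s where s: "s > 0" "T - t = s^2" "sqrt (T - t) = s"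
    using obtain_sqrt_time_to_maturity[OF assms(2)] .
  show ?thesis
    using s \<sigma>_pos b_pos assms unfolding d2_def s(3)
    by (auto intro!: derivative_eq_intros simp: field_simps)
qed

lemma DERIV_d1_t:
  assumes "V > 0" "t < T"
  shows "((\<lambda>u. D1 V u) has_real_derivative
           (ln (V / b) - (r - q - \<sigma>^2 / 2) * (T - t)) / (2 * \<sigma> * (T - t) * sqrt (T - t))) (at t)"
proof -
  obtain s where s: "s > 0" "T - t = s^2" "sqrt (T - t) = s"
    using obtain_sqrt_time_to_maturity[OF assms(2)] .
  show ?thesis
    using s \<sigma>_pos b_pos assms unfolding d1_def
    by (auto intro!: derivative_eq_intros simp: field_simps power2_eq_square)
qed

lemma DERIV_d2_t:
  assumes "V > 0" "t < T"
  shows "((\<lambda>u. D2 V u) has_real_derivative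
           - (ln (V / b) + (r - q - 2 * a - \<sigma>^2 / 2) * (T - t)) / (2 * \<sigma> * (T - t) * sqrt (T - t))) (at t)"
proof -
  obtain s where s: "s > 0" "T - t = s^2" "sqrt (T - t) = s"
    using obtain_sqrt_time_to_maturity[OF assms(2)] .
  have "ln (b / V) = - ln (V / b)"
    using assms b_pos by (simp add: ln_div)
  then show ?thesis
    using s \<sigma>_pos b_pos assms unfolding d2_def
    by (auto intro!: derivative_eq_intros simp: field_simps power2_eq_square)
qed

lemma DERIV_barrier_power_V:
  assumes "V > 0"
  shows "((\<lambda>x. barrier_power x t) has_real_derivative barrier_exponent * barrier_power V t / V) (at V)"
  using assms Vb_pos[OF b_pos, of a T t] unfolding barrier_power_def
  by (auto intro!: derivative_eq_intros simp: powr_diff field_simps)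

lemma DERIV_barrier_power_t:
  assumes "V > 0"
  shows "((\<lambda>u. barrier_power V u) has_real_derivative - barrier_exponent * a * barrier_power V t) (at t)"
proof -
  have "(\<lambda>u. barrier_power V u) = (\<lambda>u. exp (barrier_exponent * (ln (V / b) + a * (T - u))))"
    using assms by (simp add: barrier_power_eq_exp ln_div_Vb b_pos)
  then show ?thesis
    using assms by (auto intro!: derivative_eq_intros simp: barrier_power_eq_exp ln_div_Vb b_pos)
qed

definition Wsurv_dV :: "real \<Rightarrow> real \<Rightarrow> real" where
  "Wsurv_dV V t =
     (2 * std_normal_density (D1 V t) / (\<sigma> * sqrt (T - t))
      - barrier_exponent * barrier_power V t * Ncdf (D2 V t)) / V"

definition Wsurv_dVV :: "real \<Rightarrow> real \<Rightarrow> real" where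
  "Wsurv_dVV V t =
     (barrier_exponent * (1 - barrier_exponent) * barrier_power V t * Ncdf (D2 V t)
      - (2 * D1 V t / (\<sigma> * sqrt (T - t)) + 2 - barrier_exponent)
        * std_normal_density (D1 V t) / (\<sigma> * sqrt (T - t))) / V^2"

definition Wsurv_dt :: "real \<Rightarrow> real \<Rightarrow> real" where
  "Wsurv_dt V t =
     std_normal_density (D1 V t) * (ln (V / b) - a * (T - t)) / (\<sigma> * (T - t) * sqrt (T - t))
     + barrier_exponent * a * barrier_power V t * Ncdf (D2 V t)"

lemma DERIV_Wsurv_V:
  assumes "V > 0" "t < T"
  shows "((\<lambda>x. Wsurv r q a \<sigma> b T x t) has_real_derivative Wsurv_dV V t) (at V)"
  unfolding Wsurv_eq
  using \<sigma>_pos assms barrier_power_pos[OF assms(1), of t]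
  by (auto intro!: derivative_eq_intros DERIV_d1_V DERIV_d2_V DERIV_barrier_power_V
      simp: Wsurv_dV_def std_normal_density_d2 field_simps)

lemma DERIV_Wsurv_dV_V:
  assumes "V > 0" "t < T"
  shows "((\<lambda>x. Wsurv_dV x t) has_real_derivative Wsurv_dVV V t) (at V)"
proof -
  obtain s where s: "s > 0" "T - t = s^2" "sqrt (T - t) = s"
    using obtain_sqrt_time_to_maturity[OF assms(2)] .
  show ?thesis
    unfolding Wsurv_dV_def
    by (rule DERIV_cong,
        (auto intro!: derivative_eq_intros DERIV_d1_V DERIV_d2_V DERIV_barrier_power_V simp: assms)[1])
      (unfold Wsurv_dVV_def std_normal_density_d2[OF assms] s(3),
        use s(1) \<sigma>_pos assms barrier_power_pos[OF assms(1), of t] in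
        \<open>auto simp: field_simps power2_eq_square\<close>)
qed

lemma DERIV_Wsurv_t:
  assumes "V > 0" "t < T"
  shows "((\<lambda>u. Wsurv r q a \<sigma> b T V u) has_real_derivative Wsurv_dt V t) (at t)"
proof -
  obtain s where s: "s > 0" "T - t = s^2" "sqrt (T - t) = s"
    using obtain_sqrt_time_to_maturity[OF assms(2)] .
  show ?thesis
    unfolding Wsurv_eq
    by (rule DERIV_cong,
        (auto intro!: derivative_eq_intros DERIV_d1_t DERIV_d2_t DERIV_barrier_power_t simp: assms)[1])
      (unfold Wsurv_dt_def std_normal_density_d2[OF assms] s(2,3),
        use s(1) \<sigma>_pos assms barrier_power_pos[OF assms(1), of t] in
        \<open>auto simp: field_simps power2_eq_square\<close>)
qed

text \<open>The coefficients of the density term and of the distribution term vanish separately, both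
  because \<open>\<sigma>\<^sup>2 (1 - k) / 2 = r - q - a\<close> for the barrier exponent \<open>k\<close>.\<close>
lemma Wsurv_pde:
  assumes "V > 0" "t < T"
  shows "Wsurv_dt V t + \<sigma>^2 / 2 * V^2 * Wsurv_dVV V t + (r - q) * V * Wsurv_dV V t = 0"
proof -
  obtain s where s: "s > 0" "T - t = s^2" "sqrt (T - t) = s"
    using obtain_sqrt_time_to_maturity[OF assms(2)] .
  define k P where "k = barrier_exponent" and "P = barrier_power V t"
  have d1: "\<sigma> * D1 V t / s = (ln (V / b) + (r - q - \<sigma>^2 / 2) * s^2) / s^2"
    using s \<sigma>_pos unfolding d1_def by (simp add: field_simps power2_eq_square)
  have "Wsurv_dt V t + \<sigma>^2 / 2 * V^2 * Wsurv_dVV V t + (r - q) * V * Wsurv_dV V t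
      = std_normal_density (D1 V t) / (\<sigma> * s)
          * ((ln (V / b) - a * s^2) / s^2 - \<sigma> * D1 V t / s - \<sigma>^2 + k * \<sigma>^2 / 2 + 2 * (r - q))
        + k * P * Ncdf (D2 V t) * (a + \<sigma>^2 * (1 - k) / 2 - (r - q))"
    unfolding Wsurv_dt_def Wsurv_dVV_def Wsurv_dV_def s(2,3) k_def P_def
    using s(1) \<sigma>_pos assms by (simp add: field_simps power2_eq_square)
  also have "\<dots> = std_normal_density (D1 V t) / (\<sigma> * s) * (r - q - a - \<sigma>^2 * (1 - k) / 2)
        + k * P * Ncdf (D2 V t) * (a + \<sigma>^2 * (1 - k) / 2 - (r - q))"
    unfolding d1 using s(1) \<sigma>_pos by (simp add: field_simps power2_eq_square)
  also have "\<dots> = 0"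
    unfolding k_def barrier_exponent_drift by simp
  finally show ?thesis .
qed

lemma Wsurv_dV_pos:
  assumes "V \<ge> Vb a b T t" "t < T"
  shows "Wsurv_dV V t > 0"
proof -
  have V: "V > 0"
    using assms(1) Vb_pos[OF b_pos, of a T t] by linarith
  obtain s where s: "s > 0" "T - t = s^2" "sqrt (T - t) = s"
    using obtain_sqrt_time_to_maturity[OF assms(2)] .
  have P: "barrier_power V t > 0"
    using V by (rule barrier_power_pos)
  have "barrier_exponent * barrier_power V t * Ncdf (D2 V t) < 2 * std_normal_density (D1 V t) / (\<sigma> * s)"
  proof (cases "barrier_exponent \<le> 0")
    case True
    then have "barrier_exponent * barrier_power V t * Ncdf (D2 V t) \<le> 0"
      using P Ncdf_pos[of "D2 V t"] by (simp add: mult_nonpos_nonneg)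
    also have "\<dots> < 2 * std_normal_density (D1 V t) / (\<sigma> * s)"
      using s(1) \<sigma>_pos normal_density_pos[of 1 0 "D1 V t"] by simp
    finally show ?thesis .
  next
    case False
    then have m: "drift_shift t > 0"
      using \<sigma>_pos s(1) unfolding drift_shift_def s(3) by simp
    have "barrier_distance V t \<ge> 0"
      using assms Vb_pos[OF b_pos, of a T t] \<sigma>_pos unfolding barrier_distance_def by simp
    then have D2: "D2 V t < 0" and shift_le: "drift_shift t \<le> - D2 V t"
      using d1_d2_eq(2)[OF V assms(2)] m by linarith+
    have "drift_shift t * Ncdf (D2 V t) \<le> - D2 V t * Ncdf (D2 V t)"
      using mult_right_mono[OF shift_le Ncdf_nonneg] .
    also have "\<dots> < std_normal_density (D2 V t)"
      using D2 by (rule Ncdf_Mills_ratio_bound)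
    finally have "drift_shift t * Ncdf (D2 V t) < std_normal_density (D1 V t) / barrier_power V t"
      unfolding std_normal_density_d2[OF V assms(2)] .
    then show ?thesis
      using P \<sigma>_pos s(1) unfolding drift_shift_def s(3) by (simp add: field_simps)
  qed
  then show ?thesis
    using V s(1) unfolding Wsurv_dV_def s(3) by (simp add: field_simps)
qed

lemma Wsurv_at_barrier: "Wsurv r q a \<sigma> b T (Vb a b T t) t = 0"
proof -
  have "D1 (Vb a b T t) t = D2 (Vb a b T t) t"
    using b_pos unfolding d1_def d2_def Vb_def by (simp add: ln_div ln_mult algebra_simps)
  moreover have "barrier_power (Vb a b T t) t = 1"
    using Vb_pos[OF b_pos, of a T t] by (simp add: barrier_power_def)
  ultimately show ?thesis
    by (simp add: Wsurv_eq)
qed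

lemma Wsurv_less_1: "V > 0 \<Longrightarrow> Wsurv r q a \<sigma> b T V t < 1"
  using mult_pos_pos[OF barrier_power_pos Ncdf_pos, of V t "D2 V t"] Ncdf_less_1[of "D1 V t"]
  unfolding Wsurv_eq by linarith

lemma Wsurv_pos:
  assumes "V > Vb a b T t" "t < T"
  shows "Wsurv r q a \<sigma> b T V t > 0"
proof -
  have "Wsurv r q a \<sigma> b T (Vb a b T t) t < Wsurv r q a \<sigma> b T V t"
  proof (rule DERIV_pos_imp_increasing[OF assms(1)])
    fix x
    assume "Vb a b T t \<le> x" "x \<le> V"
    moreover from this have "x > 0"
      using Vb_pos[OF b_pos, of a T t] by linarith
    ultimately show "\<exists>y. ((\<lambda>x. Wsurv r q a \<sigma> b T x t) has_real_derivative y) (at x) \<and> y > 0"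
      using DERIV_Wsurv_V Wsurv_dV_pos assms(2) by blast
  qed
  then show ?thesis
    by (simp add: Wsurv_at_barrier)
qed

lemma Wsurv_at_maturity:
  assumes "V > b"
  shows "((\<lambda>t. Wsurv r q a \<sigma> b T V t) \<longlongrightarrow> 1) (at_left T)"
proof -
  have V: "V > 0" and L: "ln (V / b) > 0"
    using assms b_pos by simp_all
  have "ln (b / V) = - ln (V / b)"
    using V b_pos by (simp add: ln_div)
  then have "filterlim (\<lambda>t. D1 V t) at_top (at_left T)"
    and "filterlim (\<lambda>t. D2 V t) at_bot (at_left T)"
    using L \<sigma>_pos unfolding d1_def d2_def by real_asymp+
  then have "((\<lambda>t. Ncdf (D1 V t)) \<longlongrightarrow> 1) (at_left T)"
    and "((\<lambda>t. Ncdf (D2 V t)) \<longlongrightarrow> 0) (at_left T)"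
    by (auto intro: filterlim_compose[OF Ncdf_at_top] filterlim_compose[OF Ncdf_at_bot])
  moreover have "((\<lambda>t. barrier_power V t) \<longlongrightarrow> barrier_power V T) (at_left T)"
    using V unfolding barrier_power_eq_exp[OF V] ln_div_Vb[OF V b_pos] by (intro tendsto_intros)
  ultimately show ?thesis
    unfolding Wsurv_eq using tendsto_diff[OF _ tendsto_mult] by fastforce
qed

lemma Bond_eq:
  "Bond r q a \<sigma> b R T V t = exp (- r * (T - t)) * (R + (1 - R) * Wsurv r q a \<sigma> b T V t)"
  by (simp add: Bond_def algebra_simps)

definition Bond_dt :: "real \<Rightarrow> real \<Rightarrow> real \<Rightarrow> real" where
  "Bond_dt R V t = r * Bond r q a \<sigma> b R T V t + (1 - R) * exp (- r * (T - t)) * Wsurv_dt V t"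

definition Bond_dV :: "real \<Rightarrow> real \<Rightarrow> real \<Rightarrow> real" where
  "Bond_dV R V t = (1 - R) * exp (- r * (T - t)) * Wsurv_dV V t"

definition Bond_dVV :: "real \<Rightarrow> real \<Rightarrow> real \<Rightarrow> real" where
  "Bond_dVV R V t = (1 - R) * exp (- r * (T - t)) * Wsurv_dVV V t"

lemma DERIV_Bond_t:
  assumes "V > 0" "t < T"
  shows "((\<lambda>u. Bond r q a \<sigma> b R T V u) has_real_derivative Bond_dt R V t) (at t)"
  unfolding Bond_eq Bond_dt_def
  by (rule DERIV_cong, (auto intro!: derivative_eq_intros DERIV_Wsurv_t assms)[1]) (simp add: algebra_simps)

lemma DERIV_Bond_V:
  assumes "V > 0" "t < T"
  shows "((\<lambda>x. Bond r q a \<sigma> b R T x t) has_real_derivative Bond_dV R V t) (at V)"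
  unfolding Bond_eq Bond_dV_def
  by (rule DERIV_cong, (auto intro!: derivative_eq_intros DERIV_Wsurv_V assms)[1]) simp

lemma DERIV_Bond_dV_V:
  assumes "V > 0" "t < T"
  shows "((\<lambda>x. Bond_dV R x t) has_real_derivative Bond_dVV R V t) (at V)"
  unfolding Bond_dV_def Bond_dVV_def
  by (intro DERIV_cmult DERIV_Wsurv_dV_V assms)

lemma Bond_pde:
  assumes "V > 0" "t < T"
  shows "Bond_dt R V t + 1/2 * \<sigma>^2 * V^2 * Bond_dVV R V t + (r - q) * V * Bond_dV R V t
           - r * Bond r q a \<sigma> b R T V t = 0"
proof -
  have "Bond_dt R V t + 1/2 * \<sigma>^2 * V^2 * Bond_dVV R V t + (r - q) * V * Bond_dV R V t
          - r * Bond r q a \<sigma> b R T V t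
      = (1 - R) * exp (- r * (T - t))
          * (Wsurv_dt V t + \<sigma>^2 / 2 * V^2 * Wsurv_dVV V t + (r - q) * V * Wsurv_dV V t)"
    unfolding Bond_dt_def Bond_dV_def Bond_dVV_def by (simp add: field_simps)
  also have "\<dots> = 0"
    unfolding Wsurv_pde[OF assms] by simp
  finally show ?thesis .
qed

lemma Bond_dV_pos:
  assumes "R < 1" "V > Vb a b T t" "t < T"
  shows "Bond_dV R V t > 0"
  using assms Wsurv_dV_pos[of t V] by (simp add: Bond_dV_def)

lemma Bond_bounds:
  assumes "R < 1" "V > Vb a b T t" "t < T"
  shows "R * exp (- r * (T - t)) < Bond r q a \<sigma> b R T V t"
    and "Bond r q a \<sigma> b R T V t < exp (- r * (T - t))"
proof -
  have "0 < Wsurv r q a \<sigma> b T V t" "Wsurv r q a \<sigma> b T V t < 1"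
    using assms Vb_pos[OF b_pos, of a T t] Wsurv_pos Wsurv_less_1 by auto
  then have "0 < (1 - R) * Wsurv r q a \<sigma> b T V t" "(1 - R) * Wsurv r q a \<sigma> b T V t < 1 - R"
    using assms(1) mult_strict_left_mono[of "Wsurv r q a \<sigma> b T V t" 1 "1 - R"] by simp_all
  then show "R * exp (- r * (T - t)) < Bond r q a \<sigma> b R T V t"
    and "Bond r q a \<sigma> b R T V t < exp (- r * (T - t))"
    unfolding Bond_eq by simp_all
qed

lemma Bond_at_barrier: "Bond r q a \<sigma> b R T (Vb a b T t) t = exp (- r * (T - t)) * R"
  by (simp add: Bond_eq Wsurv_at_barrier)

lemma Bond_at_maturity:
  assumes "V > b"
  shows "((\<lambda>t. Bond r q a \<sigma> b R T V t) \<longlongrightarrow> 1) (at_left T)"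
proof -
  have "((\<lambda>t. exp (- r * (T - t)) * (R + (1 - R) * Wsurv r q a \<sigma> b T V t))
          \<longlongrightarrow> exp (- r * (T - T)) * (R + (1 - R) * 1)) (at_left T)"
    by (intro tendsto_intros Wsurv_at_maturity assms)
  then show ?thesis
    unfolding Bond_eq by simp
qed

end

theorem theorem3:
  fixes r q a \<sigma> b R T :: real
  assumes "\<sigma> > 0" and "b > 0" and "0 \<le> R" and "R < 1" and "T > 0"
  defines "B \<equiv> Bond r q a \<sigma> b R T"
  shows "\<exists>Bt BV BVV :: real \<Rightarrow> real \<Rightarrow> real.
           (\<forall>V t. 0 \<le> t \<and> t < T \<and> V > Vb a b T t \<longrightarrow>
               ((\<lambda>s. B V s) has_real_derivative Bt V t) (at t)
             \<and> ((\<lambda>x. B x t) has_real_derivative BV V t) (at V)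
             \<and> ((\<lambda>x. BV x t) has_real_derivative BVV V t) (at V))
         \<and> (\<forall>V t. 0 < t \<and> t < T \<and> V > Vb a b T t \<longrightarrow>
               Bt V t + 1/2 * \<sigma>^2 * V^2 * BVV V t + (r - q) * V * BV V t - r * B V t = 0)
         \<and> (\<forall>V t. 0 \<le> t \<and> t < T \<and> V > Vb a b T t \<longrightarrow>
               BV V t > 0
             \<and> R * exp (-r * (T - t)) < B V t
             \<and> B V t < exp (-r * (T - t)))
         \<and> (\<forall>t. 0 < t \<and> t < T \<longrightarrow> B (Vb a b T t) t = exp (-r * (T - t)) * R)
         \<and> (\<forall>V. V > b \<longrightarrow> ((\<lambda>t. B V t) \<longlongrightarrow> 1) (at_left T))"
proof -
  note model = assms(1,2)
  have V_pos: "V > 0" if "V > Vb a b T t" for V t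
    using that Vb_pos[OF model(2), of a T t] by linarith
  show ?thesis
    unfolding B_def
    apply (rule exI[of _ "Bond_dt r q a \<sigma> b T R"], rule exI[of _ "Bond_dV r q a \<sigma> b T R"],
      rule exI[of _ "Bond_dVV r q a \<sigma> b T R"])
    by (intro conjI allI impI; (elim conjE)?;
        rule DERIV_Bond_t[OF model] DERIV_Bond_V[OF model] DERIV_Bond_dV_V[OF model] Bond_pde[OF model]
          Bond_dV_pos[OF model] Bond_bounds[OF model] Bond_at_barrier[OF model] Bond_at_maturity[OF model];
        (erule V_pos | assumption | rule assms(4)))
qed

end
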